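(* Let $A$ be a finite totally ordered alphabet, $w\in A^{n}$ ($n\ge1$), $\pi=\pi(w)$ its standard permutation, $l$ the lcm of the cycle lengths of $\pi$, and $T(w)$ the table of $w$. For $i\in[n]$ let $r=r(i)$ be the length of the cycle of $\pi$ containing $i$, let $u=u(i)$ be the $i$-th row of $T(w)$ and let $x$ be the prefix of $u$ of length $r$. Then: (i) $x$ is the root of $u$ (so $x$ is primitive and $u=x^{l/r}$); (ii) every conjugate $y$ of $x$ occurs as the root of some row of $T(w)$, and the number of rows with root $y$ equals the number of rows with root $x$; (iii) the rows of $T(w)$ are in lexicographic (nondecreasing) order from top to bottom; (iv) the final column of $T(w)$, read from top to bottom, is $w$.
   Context: $[n]=\{0<1<\cdots<n-1\}$. Standard permutation: let $f(w)$ be the letters of $w$ sorted in nondecreasing order; for each letter $a$ occurring in $w$, $\pi_{a}$ is the unique order-preserving injective partial map on $[n]$ whose domain is the set of positions (indexed from $0$) of $a$ in $f(w)$ and whose range is the set of positions of $a$ in $w$; $\pi(w)=\bigcup_{a}\pi_{a}$, a permutation of $[n]$. Maps are composed left to right and $i\cdot\phi$ denotes the image of $i$. For $u=b_{1}\cdots b_{m}$ put $\pi_{u}=\pi_{b_{1}}\cdots\pi_{b_{m}}$; for each $i$ and $m$ there is a unique $u\in A^{m}$ with $i\cdot\pi_{u}$ defined. The table $T(w)$ is the $n\times l$ array whose $i$-th row ($i\in[n]$) is the unique $u\in A^{l}$ such that $i\cdot\pi_{u}$ is defined. The root of a word $u$ is the shortest $x$ with $u=x^{t}$, $t\ge1$;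 a word is primitive if not a proper power; $xy$ and $yx$ are conjugates. *)

theory Defs
  imports Main
begin

text \<open>Words are lists over a linearly ordered type; positions are indexed from 0.\<close>

definition occ_pos :: "'a \<Rightarrow> 'a list \<Rightarrow> nat list" where
  "occ_pos a v = filter (\<lambda>p. v ! p = a) [0..<length v]"

text \<open>The partial map pi_a: the unique order-preserving bijection from the positions
  of a in f(w) = sort w onto the positions of a in w.\<close>
definition pi_letter :: "'a::linorder list \<Rightarrow> 'a \<Rightarrow> nat \<Rightarrow> nat option" where
  "pi_letter w a j =
     (if j \<in> set (occ_pos a (sort w))
      then Some (occ_pos a w ! length (filter (\<lambda>p. sort w ! p = a) [0..<j]))
      else None)"

text \<open>The standard permutation pi(w), the union of the maps pi_a, as a total function
  on nat which is the identity outside [n].\<close>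
definition std_perm :: "'a::linorder list \<Rightarrow> nat \<Rightarrow> nat" where
  "std_perm w j = (if j < length w then the (pi_letter w (sort w ! j) j) else j)"

definition cycle_len :: "'a::linorder list \<Rightarrow> nat \<Rightarrow> nat" where
  "cycle_len w i = (LEAST k. 0 < k \<and> (std_perm w ^^ k) i = i)"

definition table_width :: "'a::linorder list \<Rightarrow> nat" where
  "table_width w = Lcm (cycle_len w ` {..<length w})"

text \<open>pi_u = pi_{b1} ... pi_{bm}, composed left to right (i . pi_{b1} first).\<close>
fun pi_word :: "'a::linorder list \<Rightarrow> 'a list \<Rightarrow> nat \<Rightarrow> nat option" where
  "pi_word w [] i = Some i"
| "pi_word w (b # u) i =
     (case pi_letter w b i of None \<Rightarrow> None | Some j \<Rightarrow> pi_word w u j)"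

definition table_row_len :: "'a set \<Rightarrow> 'a::linorder list \<Rightarrow> nat \<Rightarrow> nat \<Rightarrow> 'a list" where
  "table_row_len A w m i =
     (THE u. set u \<subseteq> A \<and> length u = m \<and> pi_word w u i \<noteq> None)"

definition table_row :: "'a set \<Rightarrow> 'a::linorder list \<Rightarrow> nat \<Rightarrow> 'a list" where
  "table_row A w i = table_row_len A w (table_width w) i"

definition wpow :: "'a list \<Rightarrow> nat \<Rightarrow> 'a list" where
  "wpow x t = concat (replicate t x)"

definition is_root :: "'a list \<Rightarrow> 'a list \<Rightarrow> bool" where
  "is_root x u \<longleftrightarrow> (\<exists>t\<ge>1. u = wpow x t) \<and>
     (\<forall>y t. t \<ge> 1 \<and> u = wpow y t \<longrightarrow> length x \<le> length y)"

definition root :: "'a list \<Rightarrow> 'a list" where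
  "root u = (THE x. is_root x u)"

definition primitive :: "'a list \<Rightarrow> bool" where
  "primitive x \<longleftrightarrow> (\<forall>y t. x = wpow y t \<longrightarrow> t = 1)"

definition conjugate :: "'a list \<Rightarrow> 'a list \<Rightarrow> bool" where
  "conjugate x y \<longleftrightarrow> (\<exists>p q. x = p @ q \<and> y = q @ p)"

end

theory Submission
  imports Defs
begin

text \<open>Since \<open>\<pi>\<^sub>a\<close> is defined exactly on the positions of \<open>a\<close> in \<open>f(w)\<close>, row \<open>i\<close> of
  \<open>T(w)\<close> lists the letters of \<open>f(w)\<close> at the points \<open>i, i\<cdot>\<pi>, i\<cdot>\<pi>\<^sup>2, \<dots>\<close> of the cycle of \<open>i\<close>.
  Because \<open>\<pi>\<close> preserves the order inside each letter class, two points of one cycle carrying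
  the same letter sequence coincide; hence that sequence has least period exactly the cycle
  length \<open>r\<close>, which gives (i). Moving \<open>m\<close> steps along the cycle rotates the root by \<open>m\<close>,
  so \<open>\<pi>\<^sup>m\<close> maps the rows with root \<open>x\<close> injectively to those with root \<open>rotate m x\<close>;
  applying this to \<open>x\<close> and to its conjugate in both directions gives (ii). Since \<open>f(w)\<close> is
  sorted and \<open>\<pi>\<close> is increasing within letter classes, the rows are ordered
  lexicographically (iii). Finally the letter of \<open>w\<close> at \<open>j\<cdot>\<pi>\<close> is the letter of \<open>f(w)\<close>
  at \<open>j\<close>; at \<open>j = i\<cdot>\<pi>\<^sup>l\<^sup>-\<^sup>1\<close> this is (iv).\<close>

section \<open>Powers and roots of periodic words\<close>

lemma periodic_add_mult:
  fixes s :: "nat \<Rightarrow> 'a"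
  assumes "\<And>k. s (k + p) = s k"
  shows "s (k + m * p) = s k"
proof (induction m)
  case (Suc m)
  then show ?case
    using assms[of "k + m * p"] by (simp add: add.assoc add.commute[of p])
qed simp

lemma periodic_mod:
  fixes s :: "nat \<Rightarrow> 'a"
  assumes "\<And>k. s (k + p) = s k"
  shows "s (k mod p) = s k"
  using periodic_add_mult[of s p "k mod p" "k div p", OF assms] by (simp add: mod_div_mult_eq)

lemma length_wpow: "length (wpow x t) = t * length x"
  by (induction t) (simp_all add: wpow_def)

lemma nth_wpow: "k < t * length x \<Longrightarrow> wpow x t ! k = x ! (k mod length x)"
proof (induction t arbitrary: k)
  case (Suc t)
  then show ?case
    by (cases "k < length x") (simp_all add: wpow_def nth_append le_mod_geq)
qed simp

lemma take_length_wpow: "1 \<le> t \<Longrightarrow> take (length x) (wpow x t) = x"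
  by (cases t) (simp_all add: wpow_def)

lemma root_eqI:
  assumes "is_root x u"
  shows "root u = x"
  unfolding root_def
proof (rule the_equality)
  fix x' assume "is_root x' u"
  then obtain t' where t': "1 \<le> t'" "u = wpow x' t'" "length x' \<le> length x"
    using assms unfolding is_root_def by blast
  obtain t where t: "1 \<le> t" "u = wpow x t" "length x \<le> length x'"
    using assms \<open>is_root x' u\<close> unfolding is_root_def by blast
  have "length x' = length x"
    using t(3) t'(3) by simp
  then have "x' = take (length x) u"
    by (metis t'(1,2) take_length_wpow)
  also have "\<dots> = x"
    by (metis t(1,2) take_length_wpow)
  finally show "x' = x" .
qed (fact assms)

lemma periodic_if_map_upt_eq_wpow:
  assumes per: "\<And>k. s (k + l) = s k" and "0 < l" and u: "map s [0..<l] = wpow y t"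
  shows "s (k + length y) = s k"
proof -
  have l: "l = t * length y"
    using arg_cong[OF u, of length] by (simp add: length_wpow)
  have "s k = y ! (k mod length y)" for k
  proof -
    have "s k = map s [0..<l] ! (k mod l)"
      using periodic_mod[of s l, OF per] \<open>0 < l\<close> by simp
    also have "\<dots> = y ! (k mod l mod length y)"
      unfolding u using \<open>0 < l\<close> l by (intro nth_wpow) simp
    also have "\<dots> = y ! (k mod length y)"
      using l by (simp add: mod_mod_cancel)
    finally show ?thesis .
  qed
  then show ?thesis
    by simp
qed

lemma root_of_periodic_word:
  assumes period: "\<And>p. (\<forall>k. s (k + p) = s k) \<longleftrightarrow> c dvd p" and "c dvd l" and "0 < l"
  defines "x \<equiv> map s [0..<c]"
  shows "is_root x (map s [0..<l])" and "root (map s [0..<l]) = x" and "primitive x"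
    and "map s [0..<l] = wpow x (l div c)"
proof -
  have "0 < c"
    using \<open>c dvd l\<close> \<open>0 < l\<close> by (simp add: dvd_pos_nat)
  have per_c: "s (k + c) = s k" for k
    using period[of c] by simp
  have per_l: "s (k + l) = s k" for k
    using period \<open>c dvd l\<close> by blast
  have c_le: "c \<le> length y" if "0 < m" "\<And>k. s (k + m) = s k" "map s [0..<m] = wpow y t" for m y t
  proof -
    have "c dvd length y"
      using period periodic_if_map_upt_eq_wpow[OF that(2,1,3)] by blast
    moreover have "y \<noteq> []"
      using that(1) arg_cong[OF that(3), of length] by (auto simp: length_wpow)
    ultimately show ?thesis
      by (simp add: dvd_imp_le)
  qed
  show pow: "map s [0..<l] = wpow x (l div c)"
    using \<open>0 < c\<close> \<open>c dvd l\<close>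
    by (intro nth_equalityI) (simp_all add: x_def length_wpow nth_wpow periodic_mod[of s c, OF per_c])
  show root: "is_root x (map s [0..<l])"
    unfolding is_root_def
  proof (intro conjI allI impI)
    have "0 < l div c"
      using \<open>0 < l\<close> \<open>c dvd l\<close> by (metis dvd_div_eq_0_iff neq0_conv)
    then show "\<exists>t\<ge>1. map s [0..<l] = wpow x t"
      using pow by (intro exI[of _ "l div c"]) simp
    show "length x \<le> length y" if "1 \<le> t \<and> map s [0..<l] = wpow y t" for y t
      using c_le[OF \<open>0 < l\<close> per_l] that by (simp add: x_def)
  qed
  then show "root (map s [0..<l]) = x"
    by (rule root_eqI)
  show "primitive x"
    unfolding primitive_def
  proof (intro allI impI)
    fix y t assume xy: "x = wpow y t"
    have c: "c = t * length y"
      using arg_cong[OF xy, of length] by (simp add: x_def length_wpow)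
    moreover have "c \<le> length y"
      using c_le[OF \<open>0 < c\<close> per_c] xy by (simp add: x_def)
    ultimately have "t \<le> 1"
      using \<open>0 < c\<close> by simp
    then show "t = 1"
      using \<open>0 < c\<close> c by (cases t) simp_all
  qed
qed

lemma rotate_map_periodic:
  "(\<And>k. s (k + c) = s k) \<Longrightarrow> rotate m (map s [0..<c]) = map (\<lambda>k. s (k + m)) [0..<c]"
  by (intro nth_equalityI) (simp_all add: nth_rotate periodic_mod add.commute)

lemma conjugate_sym: "conjugate x y \<Longrightarrow> conjugate y x"
  unfolding conjugate_def by blast

lemma conjugate_imp_rotate:
  assumes "conjugate x y"
  obtains m where "y = rotate m x"
proof -
  obtain p q where "x = p @ q" "y = q @ p"
    using assms unfolding conjugate_def by blast
  then show thesis
    using that[of "length p"] by (simp add: rotate_append)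
qed

section \<open>The standard permutation\<close>

lemma length_filter_upt_less:
  assumes "i < j" "P i"
  shows "length (filter P [0..<i]) < length (filter P [0..<j])"
proof -
  have "[0..<j] = [0..<i] @ i # [Suc i..<j]"
    using assms(1) upt_add_eq_append[of 0 i "j - i"] by (simp add: upt_conv_Cons)
  then show ?thesis using assms(2) by simp
qed

lemma length_occ_pos: "length (occ_pos a v) = length (filter (\<lambda>x. x = a) v)"
proof -
  have "filter (\<lambda>x. x = a) v = filter (\<lambda>x. x = a) (map (nth v) [0..<length v])"
    by (simp add: map_nth)
  also have "\<dots> = map (nth v) (occ_pos a v)"
    by (simp add: occ_pos_def filter_map o_def)
  finally show ?thesis
    by simp
qed

lemma nth_occ_pos:
  assumes "k < length (occ_pos a v)"
  shows "occ_pos a v ! k < length v" "v ! (occ_pos a v ! k) = a"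
  using nth_mem[OF assms] by (auto simp: occ_pos_def)

lemma sorted_occ_pos: "sorted_wrt (<) (occ_pos a v)"
  unfolding occ_pos_def by (intro sorted_wrt_filter) simp

definition letter_rank :: "'a list \<Rightarrow> nat \<Rightarrow> nat" where
  "letter_rank v j = length (filter (\<lambda>p. v ! p = v ! j) [0..<j])"

lemma letter_rank_less_length_occ_pos:
  "j < length v \<Longrightarrow> letter_rank v j < length (occ_pos (v ! j) v)"
  unfolding letter_rank_def occ_pos_def by (rule length_filter_upt_less) simp_all

lemma letter_rank_strict_mono:
  "i < j \<Longrightarrow> v ! i = v ! j \<Longrightarrow> letter_rank v i < letter_rank v j"
  unfolding letter_rank_def by (metis (mono_tags) length_filter_upt_less)

lemma letter_rank_sort_less:
  "j < length w \<Longrightarrow> letter_rank (sort w) j < length (occ_pos (sort w ! j) w)"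
  using letter_rank_less_length_occ_pos[of j "sort w"] by (simp add: length_occ_pos filter_sort)

lemma std_perm_conv_occ_pos:
  "j < length w \<Longrightarrow> std_perm w j = occ_pos (sort w ! j) w ! letter_rank (sort w) j"
  by (simp add: std_perm_def pi_letter_def letter_rank_def occ_pos_def)

lemma pi_letter_conv_std_perm:
  "j < length w \<Longrightarrow> pi_letter w b j = (if b = sort w ! j then Some (std_perm w j) else None)"
  by (auto simp: pi_letter_def std_perm_def occ_pos_def)

lemma std_perm_less_length: "j < length w \<Longrightarrow> std_perm w j < length w"
  and nth_std_perm: "j < length w \<Longrightarrow> w ! std_perm w j = sort w ! j"
proof -
  assume j: "j < length w"
  have "letter_rank (sort w) j < length (occ_pos (sort w ! j) w)"
    using j by (rule letter_rank_sort_less)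
  then show "std_perm w j < length w" "w ! std_perm w j = sort w ! j"
    using nth_occ_pos std_perm_conv_occ_pos[OF j] by simp_all
qed

lemma std_perm_outside: "length w \<le> j \<Longrightarrow> std_perm w j = j"
  by (simp add: std_perm_def)

lemma std_perm_strict_mono_on_letter:
  assumes "i < j" "j < length w" "sort w ! i = sort w ! j"
  shows "std_perm w i < std_perm w j"
proof -
  have "letter_rank (sort w) i < letter_rank (sort w) j"
    using assms by (simp add: letter_rank_strict_mono)
  moreover have "letter_rank (sort w) j < length (occ_pos (sort w ! j) w)"
    using assms(2) by (rule letter_rank_sort_less)
  ultimately show ?thesis
    using assms std_perm_conv_occ_pos[of i w] std_perm_conv_occ_pos[of j w]
      sorted_wrt_nth_less[OF sorted_occ_pos] by simp
qed

lemma inj_std_perm: "inj (std_perm w)"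
proof -
  have "std_perm w i \<noteq> std_perm w j" if "i < j" for i j
  proof (cases "j < length w")
    case True
    then show ?thesis
      using \<open>i < j\<close> nth_std_perm[of i w] nth_std_perm[of j w] std_perm_strict_mono_on_letter[of i j w]
      by (metis order.strict_trans less_irrefl)
  next
    case False
    then show ?thesis
      using \<open>i < j\<close> std_perm_less_length[of i w] std_perm_outside[of w] by (cases "i < length w") auto
  qed
  then show ?thesis
    by (metis injI linorder_neqE_nat)
qed

section \<open>Cycles of the standard permutation\<close>

lemma funpow_eq_self_iff_Least_dvd:
  assumes "0 < p" "(f ^^ p) x = x"
  shows "(f ^^ k) x = x \<longleftrightarrow> (LEAST c. 0 < c \<and> (f ^^ c) x = x) dvd k"
proof -
  define c where "c = (LEAST c. 0 < c \<and> (f ^^ c) x = x)"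
  have c: "0 < c" "(f ^^ c) x = x"
    using LeastI[of "\<lambda>c. 0 < c \<and> (f ^^ c) x = x" p] assms by (simp_all add: c_def)
  have "(f ^^ k) x = x \<longleftrightarrow> (f ^^ (k mod c)) x = x"
    using funpow_mod_eq[OF c(2)] by simp
  also have "\<dots> \<longleftrightarrow> k mod c = 0"
    using not_less_Least[of "k mod c" "\<lambda>c. 0 < c \<and> (f ^^ c) x = x"] c
    by (auto simp flip: c_def)
  finally show ?thesis
    by (simp add: c_def dvd_eq_mod_eq_0)
qed

lemma funpow_std_perm_less_length: "i < length w \<Longrightarrow> (std_perm w ^^ k) i < length w"
  by (induction k) (simp_all add: std_perm_less_length)

lemma cycle_len_pos: "i < length w \<Longrightarrow> 0 < cycle_len w i"
  and funpow_std_perm_eq_self_iff: "i < length w \<Longrightarrow> (std_perm w ^^ k) i = i \<longleftrightarrow> cycle_len w i dvd k"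
proof -
  assume i: "i < length w"
  have "finite {y. \<exists>n. y = (std_perm w ^^ n) i}"
    by (rule finite_subset[of _ "{..<length w}"]) (auto simp: funpow_std_perm_less_length[OF i])
  then obtain p where p: "0 < p" "(std_perm w ^^ p) i = i"
    using funpow_inj_finite[OF inj_std_perm] by blast
  show "(std_perm w ^^ k) i = i \<longleftrightarrow> cycle_len w i dvd k" for k
    unfolding cycle_len_def by (rule funpow_eq_self_iff_Least_dvd[OF p])
  show "0 < cycle_len w i"
    unfolding cycle_len_def by (rule LeastI2[of _ p]) (use p in simp_all)
qed

lemma cycle_len_funpow_std_perm:
  assumes "i < length w"
  shows "cycle_len w ((std_perm w ^^ m) i) = cycle_len w i"
proof -
  have "(std_perm w ^^ k) ((std_perm w ^^ m) i) = (std_perm w ^^ m) ((std_perm w ^^ k) i)" for k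
    by (metis add.commute comp_apply funpow_add)
  then show ?thesis
    unfolding cycle_len_def by (simp add: inj_eq[OF inj_fn[OF inj_std_perm]])
qed

lemma cycle_len_dvd_table_width: "i < length w \<Longrightarrow> cycle_len w i dvd table_width w"
  unfolding table_width_def by (rule dvd_Lcm) simp

lemma table_width_pos: "0 < table_width w"
proof -
  have "0 \<notin> cycle_len w ` {..<length w}"
    using cycle_len_pos by fastforce
  then show ?thesis
    unfolding table_width_def by (metis Lcm_0_iff_nat finite_imageI finite_lessThan neq0_conv)
qed

section \<open>Letters along a cycle\<close>

definition orbit_letter :: "'a::linorder list \<Rightarrow> nat \<Rightarrow> nat \<Rightarrow> 'a" where
  "orbit_letter w i k = sort w ! ((std_perm w ^^ k) i)"

lemma orbit_letter_add: "orbit_letter w i (k + m) = orbit_letter w ((std_perm w ^^ m) i) k"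
  by (simp add: orbit_letter_def funpow_add)

lemma orbit_letter_0: "orbit_letter w i 0 = sort w ! i"
  by (simp add: orbit_letter_def)

lemma map_orbit_letter_upt_Suc:
  "map (orbit_letter w i) [0..<Suc m] = sort w ! i # map (orbit_letter w (std_perm w i)) [0..<m]"
proof -
  have "orbit_letter w i (Suc k) = orbit_letter w (std_perm w i) k" for k
    using orbit_letter_add[of w i k 1] by simp
  then show ?thesis
    by (simp only: map_upt_Suc orbit_letter_0)
qed

lemma orbit_letter_in_set: "i < length w \<Longrightarrow> orbit_letter w i k \<in> set w"
  unfolding orbit_letter_def by (metis funpow_std_perm_less_length length_sort nth_mem set_sort)

lemma funpow_std_perm_less_if_orbit_letters_eq:
  assumes "i < j" "j < length w" "\<And>k. orbit_letter w i k = orbit_letter w j k"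
  shows "(std_perm w ^^ k) i < (std_perm w ^^ k) j"
proof (induction k)
  case (Suc k)
  have "sort w ! (std_perm w ^^ k) i = sort w ! (std_perm w ^^ k) j"
    using assms(3)[of k] by (simp add: orbit_letter_def)
  then show ?case
    using std_perm_strict_mono_on_letter[OF Suc funpow_std_perm_less_length[OF assms(2)]] by simp
qed (use assms in simp)

text \<open>If the shift by \<open>p\<close> preserved the letter sequence but moved \<open>i\<close>, order preservation
  would make the points \<open>i\<cdot>\<pi>\<^sup>m\<^sup>p\<close> strictly monotone in \<open>m\<close>, which is impossible in \<open>[n]\<close>.\<close>
lemma funpow_std_perm_eq_self_if_periodic:
  assumes i: "i < length w" and per: "\<And>k. orbit_letter w i (k + p) = orbit_letter w i k"
  shows "(std_perm w ^^ p) i = i"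
proof (rule ccontr)
  define j where "j = (std_perm w ^^ p) i"
  define a where "a m = (std_perm w ^^ (m * p)) i" for m
  have j: "j < length w"
    using funpow_std_perm_less_length[OF i] by (simp add: j_def)
  have a_less: "a m < length w" for m
    using funpow_std_perm_less_length[OF i] by (simp add: a_def)
  have a_Suc: "a (Suc m) = (std_perm w ^^ (m * p)) j" for m
    unfolding a_def j_def by (simp only: mult_Suc add.commute[of p] funpow_add comp_apply)
  have letters: "orbit_letter w i k = orbit_letter w j k" for k
    using per[of k] orbit_letter_add[of w i k p] by (simp add: j_def)
  assume "(std_perm w ^^ p) i \<noteq> i"
  then consider "i < j" | "j < i"
    unfolding j_def by linarith
  then show False
  proof cases
    case 1
    then have "strict_mono a"
      unfolding strict_mono_Suc_iff a_Suc
      using funpow_std_perm_less_if_orbit_letters_eq[OF _ j letters] by (simp add: a_def)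
    then show False
      using strict_mono_imp_increasing[of a "length w"] a_less[of "length w"] by simp
  next
    case 2
    have desc: "a (Suc m) < a m" for m
      unfolding a_Suc
      using funpow_std_perm_less_if_orbit_letters_eq[OF 2 i] letters by (simp add: a_def)
    have "a m + m \<le> a 0" for m
    proof (induction m)
      case (Suc m)
      then show ?case
        using desc[of m] by linarith
    qed simp
    from this[of "length w"] show False
      using a_less[of 0] by simp
  qed
qed

lemma orbit_letter_periodic_iff:
  assumes "i < length w"
  shows "(\<forall>k. orbit_letter w i (k + p) = orbit_letter w i k) \<longleftrightarrow> cycle_len w i dvd p"
proof
  assume "\<forall>k. orbit_letter w i (k + p) = orbit_letter w i k"
  then show "cycle_len w i dvd p"
    using funpow_std_perm_eq_self_if_periodic funpow_std_perm_eq_self_iff assms by blast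
next
  assume "cycle_len w i dvd p"
  then have "(std_perm w ^^ p) i = i"
    using funpow_std_perm_eq_self_iff[OF assms] by blast
  then show "\<forall>k. orbit_letter w i (k + p) = orbit_letter w i k"
    by (simp add: orbit_letter_add)
qed

section \<open>The rows of the table\<close>

lemma pi_word_defined_iff:
  "i < length w \<Longrightarrow> pi_word w u i \<noteq> None \<longleftrightarrow> u = map (orbit_letter w i) [0..<length u]"
proof (induction u arbitrary: i)
  case (Cons b u)
  then show ?case
    using Cons.IH[OF std_perm_less_length[OF Cons.prems]]
    by (simp add: pi_letter_conv_std_perm map_orbit_letter_upt_Suc del: upt_Suc)
qed simp

lemma table_row_eq:
  assumes "i < length w" "set w \<subseteq> A"
  shows "table_row A w i = map (orbit_letter w i) [0..<table_width w]"
  unfolding table_row_def table_row_len_def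
proof (rule the_equality)
  show "set (map (orbit_letter w i) [0..<table_width w]) \<subseteq> A \<and>
      length (map (orbit_letter w i) [0..<table_width w]) = table_width w \<and>
      pi_word w (map (orbit_letter w i) [0..<table_width w]) i \<noteq> None"
    using assms orbit_letter_in_set pi_word_defined_iff by fastforce
next
  fix u assume u: "set u \<subseteq> A \<and> length u = table_width w \<and> pi_word w u i \<noteq> None"
  then have "u = map (orbit_letter w i) [0..<length u]"
    using pi_word_defined_iff[OF assms(1)] by blast
  with u show "u = map (orbit_letter w i) [0..<table_width w]"
    by simp
qed

lemma table_row_root:
  assumes i: "i < length w" and A: "set w \<subseteq> A"
  defines "x \<equiv> take (cycle_len w i) (table_row A w i)"
  shows "x = map (orbit_letter w i) [0..<cycle_len w i]"
    and "is_root x (table_row A w i)" and "root (table_row A w i) = x" and "primitive x"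
    and "table_row A w i = wpow x (table_width w div cycle_len w i)"
proof -
  have dvd: "cycle_len w i dvd table_width w"
    using i by (rule cycle_len_dvd_table_width)
  show x: "x = map (orbit_letter w i) [0..<cycle_len w i]"
    using dvd_imp_le[OF dvd table_width_pos]
    by (simp add: x_def table_row_eq[OF i A] take_map)
  note root_of_periodic_word[OF orbit_letter_periodic_iff[OF i] dvd table_width_pos,
      folded x table_row_eq[OF i A]]
  then show "is_root x (table_row A w i)" "root (table_row A w i) = x" "primitive x"
    "table_row A w i = wpow x (table_width w div cycle_len w i)"
    by blast+
qed

lemma root_table_row_funpow_std_perm:
  assumes i: "i < length w" and A: "set w \<subseteq> A"
  shows "root (table_row A w ((std_perm w ^^ m) i)) = rotate m (root (table_row A w i))"
proof -
  let ?j = "(std_perm w ^^ m) i"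
  have j: "?j < length w"
    using i by (rule funpow_std_perm_less_length)
  have per: "orbit_letter w i (k + cycle_len w i) = orbit_letter w i k" for k
    using orbit_letter_periodic_iff[OF i, of "cycle_len w i"] by simp
  have "root (table_row A w ?j) = map (orbit_letter w ?j) [0..<cycle_len w ?j]"
    using table_row_root(3,1)[OF j A] by (rule trans)
  also have "\<dots> = map (\<lambda>k. orbit_letter w i (k + m)) [0..<cycle_len w i]"
    by (simp only: cycle_len_funpow_std_perm[OF i] orbit_letter_add)
  also have "\<dots> = rotate m (map (orbit_letter w i) [0..<cycle_len w i])"
    using rotate_map_periodic[of "orbit_letter w i", OF per] by (rule sym)
  also have "\<dots> = rotate m (root (table_row A w i))"
    by (simp only: table_row_root(1,3)[OF i A])
  finally show ?thesis .
qed

lemma card_rows_with_root_le_rotate: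
  assumes "set w \<subseteq> A"
  shows "card {j. j < length w \<and> root (table_row A w j) = x}
    \<le> card {j. j < length w \<and> root (table_row A w j) = rotate m x}"
proof (rule card_inj_on_le)
  show "inj_on (std_perm w ^^ m) {j. j < length w \<and> root (table_row A w j) = x}"
    using inj_fn[OF inj_std_perm] by (rule inj_on_subset) simp
  show "(std_perm w ^^ m) ` {j. j < length w \<and> root (table_row A w j) = x}
    \<subseteq> {j. j < length w \<and> root (table_row A w j) = rotate m x}"
  proof (rule image_subsetI)
    fix j assume "j \<in> {j. j < length w \<and> root (table_row A w j) = x}"
    then show "(std_perm w ^^ m) j \<in> {j. j < length w \<and> root (table_row A w j) = rotate m x}"
      using root_table_row_funpow_std_perm[OF _ assms, of j m] funpow_std_perm_less_length[of j w m]
      by simp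
  qed
qed simp

lemma conjugate_root_table_row:
  assumes i: "i < length w" and A: "set w \<subseteq> A"
    and conj: "conjugate (root (table_row A w i)) y"
  shows "\<exists>j<length w. root (table_row A w j) = y"
    and "card {j. j < length w \<and> root (table_row A w j) = y}
      = card {j. j < length w \<and> root (table_row A w j) = root (table_row A w i)}"
proof -
  obtain m where m: "y = rotate m (root (table_row A w i))"
    using conj by (rule conjugate_imp_rotate)
  obtain m' where m': "root (table_row A w i) = rotate m' y"
    using conjugate_sym[OF conj] by (rule conjugate_imp_rotate)
  show "\<exists>j<length w. root (table_row A w j) = y"
  proof (intro exI conjI)
    show "(std_perm w ^^ m) i < length w"
      using i by (rule funpow_std_perm_less_length)
    show "root (table_row A w ((std_perm w ^^ m) i)) = y"
      unfolding m by (rule root_table_row_funpow_std_perm[OF i A])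
  qed
  have "card {j. j < length w \<and> root (table_row A w j) = root (table_row A w i)}
      \<le> card {j. j < length w \<and> root (table_row A w j) = y}"
    using card_rows_with_root_le_rotate[OF A, of "root (table_row A w i)" m] by (simp only: m)
  moreover have "card {j. j < length w \<and> root (table_row A w j) = y}
      \<le> card {j. j < length w \<and> root (table_row A w j) = root (table_row A w i)}"
    using card_rows_with_root_le_rotate[OF A, of y m'] by (simp only: m')
  ultimately show "card {j. j < length w \<and> root (table_row A w j) = y}
      = card {j. j < length w \<and> root (table_row A w j) = root (table_row A w i)}"
    by (rule le_antisym[rotated])
qed

lemma lexordp_eq_map_orbit_letter:
  "i \<le> j \<Longrightarrow> j < length w
    \<Longrightarrow> lexordp_eq (map (orbit_letter w i) [0..<m]) (map (orbit_letter w j) [0..<m])"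
proof (induction m arbitrary: i j)
  case (Suc m)
  have "sort w ! i \<le> sort w ! j"
    using Suc.prems by (simp add: sorted_nth_mono)
  moreover have "std_perm w i \<le> std_perm w j" if "sort w ! i = sort w ! j"
    using Suc.prems std_perm_strict_mono_on_letter[of i j w] that by (cases "i = j") simp_all
  ultimately show ?case
    using Suc.IH std_perm_less_length[OF Suc.prems(2)]
    by (auto simp: map_orbit_letter_upt_Suc simp del: upt_Suc)
qed simp

lemma last_table_row:
  assumes i: "i < length w" and A: "set w \<subseteq> A"
  shows "last (table_row A w i) = w ! i"
proof -
  define k where "k = table_width w - 1"
  have l: "table_width w = Suc k"
    using table_width_pos[of w] by (simp add: k_def)
  then have "std_perm w ((std_perm w ^^ k) i) = i"
    using funpow_std_perm_eq_self_iff[OF i] cycle_len_dvd_table_width[OF i]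
    by (metis funpow.simps(2) o_apply)
  then have "w ! i = sort w ! (std_perm w ^^ k) i"
    using nth_std_perm[OF funpow_std_perm_less_length[OF i]] by metis
  then show ?thesis
    by (simp add: table_row_eq[OF i A] l orbit_letter_def)
qed

theorem proposition1p2p9:
  fixes A :: "'a::linorder set" and w :: "'a list" and n :: nat
  assumes "finite A" and "set w \<subseteq> A" and "length w = n" and "n \<ge> 1"
  shows
    "(\<forall>i<n. is_root (take (cycle_len w i) (table_row A w i)) (table_row A w i)
          \<and> root (table_row A w i) = take (cycle_len w i) (table_row A w i)
          \<and> primitive (take (cycle_len w i) (table_row A w i))
          \<and> table_row A w i = wpow (take (cycle_len w i) (table_row A w i))
                                  (table_width w div cycle_len w i))
     \<and> (\<forall>i<n. \<forall>y. conjugate (take (cycle_len w i) (table_row A w i)) y \<longrightarrow>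
          (\<exists>j<n. root (table_row A w j) = y) \<and>
          card {j. j < n \<and> root (table_row A w j) = y} =
          card {j. j < n \<and> root (table_row A w j) = take (cycle_len w i) (table_row A w i)})
     \<and> (\<forall>i j. i \<le> j \<and> j < n \<longrightarrow> lexordp_eq (table_row A w i) (table_row A w j))
     \<and> map (\<lambda>i. last (table_row A w i)) [0..<n] = w"
proof (intro conjI allI impI)
  fix i assume "i < n"
  then show "is_root (take (cycle_len w i) (table_row A w i)) (table_row A w i)"
    and "root (table_row A w i) = take (cycle_len w i) (table_row A w i)"
    and "primitive (take (cycle_len w i) (table_row A w i))"
    and "table_row A w i = wpow (take (cycle_len w i) (table_row A w i))
                                (table_width w div cycle_len w i)"
    using table_row_root[OF _ assms(2)] assms(3) by simp_all
next
  fix i y assume "i < n" and "conjugate (take (cycle_len w i) (table_row A w i)) y"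
  then show "\<exists>j<n. root (table_row A w j) = y"
    and "card {j. j < n \<and> root (table_row A w j) = y} =
      card {j. j < n \<and> root (table_row A w j) = take (cycle_len w i) (table_row A w i)}"
    using conjugate_root_table_row[OF _ assms(2)] table_row_root(3)[OF _ assms(2)] assms(3)
    by simp_all
next
  fix i j assume "i \<le> j \<and> j < n"
  then have "i \<le> j" "i < length w" "j < length w"
    using assms(3) by simp_all
  then show "lexordp_eq (table_row A w i) (table_row A w j)"
    by (simp add: table_row_eq[OF _ assms(2)] lexordp_eq_map_orbit_letter)
next
  show "map (\<lambda>i. last (table_row A w i)) [0..<n] = w"
    using last_table_row[OF _ assms(2)] assms(3) by (intro nth_equalityI) simp_all
qed

end
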